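(* Let $m\ge2$, $n\ge0$, $0\le k\le n$, input $\rho=|\vec n_0\rangle\langle\vec n_0|$ with $N_0=N(\vec n_0)$, outcome $\vec n$ with $|\vec n|=n$ and $N=N(\vec n)$, and $g\in\mathrm{SU}(m)$. Assuming $s_{\lambda_k}\neq0$, the PNR filter function satisfies $$f_{\lambda_k}(\vec n,g)=\frac{1}{s_{\lambda_k}}(-1)^{\varphi(N_0)+\varphi(N)}\sum_{M\in\mathrm{GT}(\lambda_k)}C^{M}_{N_0,\bar N_0}\sum_{M'\in\mathrm{GT}(\lambda_k)}C^{M'}_{N,\bar N}\,\langle M|\lambda_k(g)^\dagger|M'\rangle,$$ where only zero-weight $M,M'$ contribute.
   Context: Fix integers $m\ge 2$, $n\ge0$. $\mathcal H_n^m$ is the span of Fock states $|\vec n\rangle=|n_1,\dots,n_m\rangle$, $\vec n\in\mathbb N^m$, $\sum_in_i=n$. $\tau_n^m$ is the totally symmetric irrep of $\mathrm{SU}(m)$ on $\mathcal H_n^m$ given by passive transformations; $\bar\tau_n^m$ its complex conjugate in the Fock basis; $\omega_n^m(g)(X)=\tau_n^m(g)X\tau_n^m(g)^\dagger\cong\tau_n^m\otimes\bar\tau_n^m$ via vectorization $|A\rangle\!\rangle=\sum\langle\vec n|A|\vec m\rangle|\vec n\rangle\otimes|\vec m\rangle$. $\lambda_k$ is the irrep with Young diagram $(2k,k,\dots,k,0)$ (first row $2k$ boxes, rows $2,\dots,m-1$ with $k$ boxes, empty last row), $d_{\lambda_k}$ its dimension; $\tau_n^m\otimes\bar\tau_n^m\cong\bigoplus_{k=0}^n\lambda_k$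 multiplicity-free, $P_{\lambda_k}$ is the orthogonal projector onto the $\lambda_k$ component and $\lambda_k(g)$ the action of $g$ on it. Gelfand–Tsetlin (GT) patterns: for an irrep $\lambda=(\lambda_1,\dots,\lambda_m)$, $\lambda_m=0$, a GT pattern $M=(M_{i,j})_{1\le i\le j\le m}$ has $M_{i,m}=\lambda_i$ and $M_{i,j+1}\ge M_{i,j}\ge M_{i+1,j+1}$; $\mathrm{GT}(\lambda)$ is the set of such patterns and $\{|M\rangle\}$ the orthonormal GT basis of $\lambda$ (Condon–Shortley convention). The Fock state $|\vec n\rangle$ is identified with the GT basis vector $|N\rangle$ of $\tau_n^m$ with $N_{1,j}=n_1+\dots+n_j$, $N_{i,j}=0$ for $i\ge2$; write $N=N(\vec n)$. The dual pattern of $M$ is $\bar M_{i,l}:=M_{1,m}-M_{l-i+1,l}$, a GT basis label of the dual irrep. With $s_M(k)=\sum_{j=1}^k\sum_{i=1}^jM_{i,j}$ and $M_{\max}$ the highest-weight pattern ($M_{i,j}=M_{i,m}$), set $\varphi(M):=s_M(m-1)-s_{M_{\max}}(m-1)\in\mathbb Z$; then, regarding the Fock basis vector as a basis vector of $\bar\tau_n^m$, $|N\rangle=(-1)^{\varphi(N)}|\bar N\rangle$. For $N_1,N_2\in\mathrm{GT}(\tau_n^m)$ and $M\in\mathrm{GT}(\lambda_k)$, the real SU($m$) Clebsch–Gordan coefficients are $C^M_{N_1,\bar N_2}:=\langle N_1,\bar N_2|M\rangle$, i.e. $|N_1\rangle\otimes|\bar N_2\rangle=\sum_k\sum_{M\in\mathrm{GT}(\lambda_k)}C^M_{N_1,\bar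 N_2}|M\rangle$; they vanish unless the weight of $M$ is the sum of the weights of $N_1$ and $\bar N_2$. Filter function: for input $\rho=|\vec n_0\rangle\langle\vec n_0|$, $f_{\lambda}(\vec n,g):=s_{\lambda}^{-1}\langle\vec n|\tau_n^m(g)\,[P_{\lambda}(\rho)]\,\tau_n^m(g)^\dagger|\vec n\rangle$, with $s_\lambda:=d_\lambda^{-1}\sum_{\vec n\in\mathbb N^m}\langle\!\langle\vec n,\vec n|P_\lambda|\vec n,\vec n\rangle\!\rangle$. *)

theory Defs
  imports Complex_Main "HOL-Combinatorics.Permutations"
begin

text \<open>Fock states of m modes and n photons: occupation vectors v :: nat => nat,
  mode i (0-based) has v i photons, v i = 0 for i >= m, total n.\<close>

type_synonym fock = "nat \<Rightarrow> nat"
type_synonym op = "fock \<Rightarrow> fock \<Rightarrow> complex"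
type_synonym gtpat = "nat \<Rightarrow> nat \<Rightarrow> nat"   \<comment> \<open>M i j, 1 <= i <= j <= m\<close>

definition comps :: "nat \<Rightarrow> nat \<Rightarrow> fock set" where
  "comps m n = {v. (\<forall>i\<ge>m. v i = 0) \<and> (\<Sum>i<m. v i) = n}"

definition ops :: "nat \<Rightarrow> nat \<Rightarrow> op set" where
  "ops m n = {X. \<forall>a b. a \<notin> comps m n \<or> b \<notin> comps m n \<longrightarrow> X a b = 0}"

definition ketbra :: "fock \<Rightarrow> fock \<Rightarrow> op" where
  "ketbra u v = (\<lambda>a b. if a = u \<and> b = v then 1 else 0)"

definition op_mult :: "nat \<Rightarrow> nat \<Rightarrow> op \<Rightarrow> op \<Rightarrow> op" where
  "op_mult m n X Y = (\<lambda>a b. \<Sum>c\<in>comps m n. X a c * Y c b)"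

definition op_adj :: "op \<Rightarrow> op" where
  "op_adj X = (\<lambda>a b. cnj (X b a))"

definition hs_inner :: "nat \<Rightarrow> nat \<Rightarrow> op \<Rightarrow> op \<Rightarrow> complex" where
  "hs_inner m n X Y = (\<Sum>a\<in>comps m n. \<Sum>b\<in>comps m n. cnj (X a b) * Y a b)"

definition mdet :: "nat \<Rightarrow> (nat \<Rightarrow> nat \<Rightarrow> complex) \<Rightarrow> complex" where
  "mdet m g = (\<Sum>\<sigma> | \<sigma> permutes {..<m}. of_int (sign \<sigma>) * (\<Prod>i<m. g i (\<sigma> i)))"

definition SU :: "nat \<Rightarrow> (nat \<Rightarrow> nat \<Rightarrow> complex) set" where
  "SU m = {g. (\<forall>i j. i \<ge> m \<or> j \<ge> m \<longrightarrow> g i j = 0)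
              \<and> (\<forall>i<m. \<forall>j<m. (\<Sum>l<m. cnj (g l i) * g l j) = (if i = j then 1 else 0))
              \<and> mdet m g = 1}"

definition madj :: "(nat \<Rightarrow> nat \<Rightarrow> complex) \<Rightarrow> (nat \<Rightarrow> nat \<Rightarrow> complex)" where
  "madj g = (\<lambda>i j. cnj (g j i))"

definition modelist :: "nat \<Rightarrow> fock \<Rightarrow> nat list" where
  "modelist m v = concat (map (\<lambda>i. replicate (v i) i) [0..<m])"

definition fact_vec :: "nat \<Rightarrow> fock \<Rightarrow> real" where
  "fact_vec m v = (\<Prod>i<m. fact (v i))"

text \<open>Passive linear-optical transformation tau_n^m(g), defined by
  a_j^dagger |-> sum_i g i j a_i^dagger; its Fock matrix elements are
  <a|tau(g)|b> = per(g[a,b]) / sqrt(a! b!).\<close>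
definition tau :: "nat \<Rightarrow> nat \<Rightarrow> (nat \<Rightarrow> nat \<Rightarrow> complex) \<Rightarrow> op" where
  "tau m n g = (\<lambda>a b. if a \<in> comps m n \<and> b \<in> comps m n then
      (\<Sum>\<sigma> | \<sigma> permutes {..<n}. \<Prod>l<n. g (modelist m a ! l) (modelist m b ! (\<sigma> l)))
        / of_real (sqrt (fact_vec m a * fact_vec m b))
    else 0)"

definition omega :: "nat \<Rightarrow> nat \<Rightarrow> (nat \<Rightarrow> nat \<Rightarrow> complex) \<Rightarrow> op \<Rightarrow> op" where
  "omega m n g X = op_mult m n (op_mult m n (tau m n g) X) (op_adj (tau m n g))"

definition op_span :: "op set \<Rightarrow> op set" where
  "op_span S = {X. \<exists>F c. finite F \<and> F \<subseteq> S \<and> X = (\<lambda>a b. \<Sum>Y\<in>F. c Y * Y a b)}"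

definition is_subsp :: "nat \<Rightarrow> nat \<Rightarrow> op set \<Rightarrow> bool" where
  "is_subsp m n W \<longleftrightarrow> W \<subseteq> ops m n \<and> op_span W = W"

definition invariant :: "nat \<Rightarrow> nat \<Rightarrow> op set \<Rightarrow> bool" where
  "invariant m n W \<longleftrightarrow> is_subsp m n W \<and> (\<forall>g\<in>SU m. \<forall>X\<in>W. omega m n g X \<in> W)"

definition irreducible_inv :: "nat \<Rightarrow> nat \<Rightarrow> op set \<Rightarrow> bool" where
  "irreducible_inv m n W \<longleftrightarrow> invariant m n W \<and> W \<noteq> {\<lambda>a b. 0}
     \<and> (\<forall>V. invariant m n V \<and> V \<subseteq> W \<longrightarrow> V = {\<lambda>a b. 0} \<or> V = W)"

text \<open>Weight spaces of omega for the maximal torus: |a><b| has (gl(m)-)weight a - b.\<close>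
definition wspace :: "nat \<Rightarrow> nat \<Rightarrow> (nat \<Rightarrow> int) \<Rightarrow> op set" where
  "wspace m n \<nu> = {X \<in> ops m n. \<forall>a b. X a b \<noteq> 0 \<longrightarrow> (\<forall>j<m. int (a j) - int (b j) = \<nu> j)}"

definition lex_gt :: "nat \<Rightarrow> (nat \<Rightarrow> int) \<Rightarrow> (nat \<Rightarrow> int) \<Rightarrow> bool" where
  "lex_gt m \<nu> \<mu> \<longleftrightarrow> (\<exists>j<m. (\<forall>i<j. \<nu> i = \<mu> i) \<and> \<nu> j > \<mu> j)"

text \<open>Weights are taken up to adding multiples of (1,...,1), normalised here so that
  they sum to 0 (the gl(m)-weights of operators on H_n^m).\<close>
definition has_hw :: "nat \<Rightarrow> nat \<Rightarrow> op set \<Rightarrow> (nat \<Rightarrow> int) \<Rightarrow> bool" where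
  "has_hw m n W \<mu> \<longleftrightarrow> (\<exists>X\<in>W \<inter> wspace m n \<mu>. X \<noteq> (\<lambda>a b. 0))
     \<and> (\<forall>\<nu>. lex_gt m \<nu> \<mu> \<longrightarrow> W \<inter> wspace m n \<nu> \<subseteq> {\<lambda>a b. 0})"

text \<open>Young diagram lambda_k = (2k, k, ..., k, 0) (rows 1..m) and the same weight
  normalised to sum zero: (k, 0, ..., 0, -k) (indices 0..m-1).\<close>
definition lam :: "nat \<Rightarrow> nat \<Rightarrow> nat \<Rightarrow> nat" where
  "lam m k i = (if i = 1 then 2 * k else if 2 \<le> i \<and> i \<le> m - 1 then k else 0)"

definition lam_wt0 :: "nat \<Rightarrow> nat \<Rightarrow> nat \<Rightarrow> int" where
  "lam_wt0 m k j = int (lam m k (j + 1)) - int k"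

text \<open>The lambda_k component of omega = tau (x) conj tau (isotypic component).\<close>
definition comp :: "nat \<Rightarrow> nat \<Rightarrow> nat \<Rightarrow> op set" where
  "comp m n k = op_span (\<Union>{W. irreducible_inv m n W \<and> has_hw m n W (lam_wt0 m k)})"

definition proj :: "nat \<Rightarrow> nat \<Rightarrow> op set \<Rightarrow> op \<Rightarrow> op" where
  "proj m n W X = (THE Y. Y \<in> W \<and> (\<forall>Z\<in>W. hs_inner m n Z (\<lambda>a b. X a b - Y a b) = 0))"

definition P_lam :: "nat \<Rightarrow> nat \<Rightarrow> nat \<Rightarrow> op \<Rightarrow> op" where
  "P_lam m n k = proj m n (comp m n k)"

definition GT :: "nat \<Rightarrow> (nat \<Rightarrow> nat) \<Rightarrow> gtpat set" where
  "GT m lm = {M. (\<forall>i j. \<not> (1 \<le> i \<and> i \<le> j \<and> j \<le> m) \<longrightarrow> M i j = 0)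
        \<and> (\<forall>i\<in>{1..m}. M i m = lm i)
        \<and> (\<forall>i j. 1 \<le> i \<and> i \<le> j \<and> j < m \<longrightarrow> M i (j + 1) \<ge> M i j \<and> M i j \<ge> M (i + 1) (j + 1))}"

definition rowsum :: "gtpat \<Rightarrow> nat \<Rightarrow> int" where
  "rowsum M j = (\<Sum>i=1..j. int (M i j))"

definition gt_weight :: "gtpat \<Rightarrow> nat \<Rightarrow> int" where
  "gt_weight M j = rowsum M j - rowsum M (j - 1)"

definition zero_weight :: "nat \<Rightarrow> gtpat \<Rightarrow> bool" where
  "zero_weight m M \<longleftrightarrow> (\<forall>j\<in>{1..m}. gt_weight M j = gt_weight M 1)"

definition s_pat :: "gtpat \<Rightarrow> nat \<Rightarrow> int" where
  "s_pat M k = (\<Sum>j=1..k. \<Sum>i=1..j. int (M i j))"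

definition M_max :: "nat \<Rightarrow> gtpat \<Rightarrow> gtpat" where
  "M_max m M = (\<lambda>i j. if 1 \<le> i \<and> i \<le> j \<and> j \<le> m then M i m else 0)"

definition phi :: "nat \<Rightarrow> gtpat \<Rightarrow> int" where
  "phi m M = s_pat M (m - 1) - s_pat (M_max m M) (m - 1)"

definition Npat :: "nat \<Rightarrow> fock \<Rightarrow> gtpat" where
  "Npat m v = (\<lambda>i j. if i = 1 \<and> 1 \<le> j \<and> j \<le> m then (\<Sum>l<j. v l) else 0)"

text \<open>B M is the GT basis vector |M> of lambda_k, as an operator (vectorization inverted).
  Requirements satisfied by the Condon-Shortley GT basis: orthonormal basis of the
  lambda_k component, each |M> a weight vector whose SU(m) weight is that of M, and
  real Clebsch-Gordan coefficients.\<close>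
definition GT_basis :: "nat \<Rightarrow> nat \<Rightarrow> nat \<Rightarrow> (gtpat \<Rightarrow> op) \<Rightarrow> bool" where
  "GT_basis m n k B \<longleftrightarrow>
     (\<forall>M\<in>GT m (lam m k). B M \<in> comp m n k)
   \<and> (\<forall>M\<in>GT m (lam m k). \<forall>M'\<in>GT m (lam m k).
         hs_inner m n (B M) (B M') = (if M = M' then 1 else 0))
   \<and> op_span (B ` GT m (lam m k)) = comp m n k
   \<and> (\<forall>M\<in>GT m (lam m k). \<forall>a b. B M a b \<noteq> 0 \<longrightarrow>
         (\<forall>j<m. gt_weight M (j + 1) = int (a j) - int (b j) + int k))
   \<and> (\<forall>M\<in>GT m (lam m k). \<forall>a b. B M a b \<in> \<real>)"

text \<open>C^M_{N1, bar N2} = <N1, bar N2 | M>, where |N1> (x) |bar N2> = (-1)^phi(N2) |n1> (x) |n2>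
  (vectorization of |n1><n2|).\<close>
definition CG :: "nat \<Rightarrow> (gtpat \<Rightarrow> op) \<Rightarrow> gtpat \<Rightarrow> fock \<Rightarrow> fock \<Rightarrow> complex" where
  "CG m B M n1 n2 = (-1) powi (phi m (Npat m n2)) * B M n1 n2"

text \<open><M| lambda_k(g)^dagger |M'> = conj <M'| lambda_k(g) |M>.\<close>
definition lam_elem_adj :: "nat \<Rightarrow> nat \<Rightarrow> (gtpat \<Rightarrow> op) \<Rightarrow> (nat \<Rightarrow> nat \<Rightarrow> complex) \<Rightarrow> gtpat \<Rightarrow> gtpat \<Rightarrow> complex" where
  "lam_elem_adj m n B g M M' = cnj (hs_inner m n (B M') (omega m n g (B M)))"

definition d_lam :: "nat \<Rightarrow> nat \<Rightarrow> nat" where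
  "d_lam m k = card (GT m (lam m k))"

definition s_lam :: "nat \<Rightarrow> nat \<Rightarrow> nat \<Rightarrow> complex" where
  "s_lam m n k = (1 / of_nat (d_lam m k)) *
     (\<Sum>v\<in>comps m n. hs_inner m n (ketbra v v) (P_lam m n k (ketbra v v)))"

definition filt :: "nat \<Rightarrow> nat \<Rightarrow> nat \<Rightarrow> fock \<Rightarrow> fock \<Rightarrow> (nat \<Rightarrow> nat \<Rightarrow> complex) \<Rightarrow> complex" where
  "filt m n k v0 v g = (1 / s_lam m n k) * omega m n g (P_lam m n k (ketbra v0 v0)) v v"

end

theory Submission imports Defs begin

text \<open>By orthonormality of the GT basis, \<open>P\<^sub>\<lambda>(|n\<^sub>0\<rangle>\<langle>n\<^sub>0|) = \<Sum>\<^sub>M \<langle>M|n\<^sub>0,n\<^sub>0\<rangle> |M\<rangle>\<close>; applying \<open>\<omega>(g)\<close>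
  and expanding in the GT basis once more gives the \<open>(n,n)\<close> entry as a double sum of
  \<open>\<langle>n\<^sub>0,n\<^sub>0|M\<rangle> \<langle>M'|\<lambda>(g)|M\<rangle> \<langle>n,n|M'\<rangle>\<close>. A basis vector with \<open>\<langle>n\<^sub>0,n\<^sub>0|M\<rangle> \<noteq> 0\<close> has zero weight, hence
  only diagonal entries; so the projected state is real diagonal, \<open>\<omega>(g)\<close> of it is Hermitian,
  and conjugating the entry turns \<open>\<langle>M'|\<lambda>(g)|M\<rangle>\<close> into \<open>\<langle>M|\<lambda>(g)\<^sup>\<dagger>|M'\<rangle>\<close>. The signs
  \<open>(-1)\<^sup>\<phi>\<close> relating Fock and dual GT vectors square to one.\<close>

lemma finite_comps: "finite (comps m n)"
proof -
  have "comps m n \<subseteq> {f. \<forall>x. (x \<in> {..<m} \<longrightarrow> f x \<in> {..n}) \<and> (x \<notin> {..<m} \<longrightarrow> f x = 0)}"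
  proof (clarify, intro conjI impI)
    fix f x assume f: "f \<in> comps m n"
    { assume "x \<in> {..<m}"
      then have "f x \<le> (\<Sum>i<m. f i)" by (intro member_le_sum) auto
      then show "f x \<in> {..n}" using f unfolding comps_def by auto }
    { assume "x \<notin> {..<m}" then show "f x = 0" using f unfolding comps_def by auto }
  qed
  then show ?thesis by (rule finite_subset) (intro finite_set_of_finite_funs; simp)
qed

lemma GT_entry_le:
  assumes "M \<in> GT m lm" "1 \<le> i" "i \<le> j" "j \<le> m"
  shows "M i j \<le> lm i"
proof -
  have "M i j \<le> M i m" using \<open>j \<le> m\<close> \<open>i \<le> j\<close>
  proof (induction rule: inc_induct)
    case (step j')
    then have "M i j' \<le> M i (Suc j')" using assms(1,2) unfolding GT_def by auto
    then show ?case using step by simp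
  qed simp
  then show ?thesis using assms unfolding GT_def by auto
qed

lemma finite_GT: "finite (GT m lm)"
proof -
  define K where "K = (\<Sum>i=1..m. lm i)"
  let ?A = "{..m} \<times> {..m}"
  have "GT m lm \<subseteq> curry ` {f. \<forall>x. (x \<in> ?A \<longrightarrow> f x \<in> {..K}) \<and> (x \<notin> ?A \<longrightarrow> f x = 0)}"
  proof
    fix M assume M: "M \<in> GT m lm"
    have "M i j \<le> K" for i j
    proof (cases "1 \<le> i \<and> i \<le> j \<and> j \<le> m")
      case True
      then have "M i j \<le> lm i" using GT_entry_le[OF M] by blast
      also have "lm i \<le> K" unfolding K_def using True by (intro member_le_sum) auto
      finally show ?thesis .
    next
      case False
      then show ?thesis using M unfolding GT_def by auto
    qed
    moreover have "M i j = 0" if "(i, j) \<notin> ?A" for i j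
      using M that unfolding GT_def by auto
    ultimately show "M \<in> curry ` {f. \<forall>x. (x \<in> ?A \<longrightarrow> f x \<in> {..K}) \<and> (x \<notin> ?A \<longrightarrow> f x = 0)}"
      by (intro image_eqI[of _ _ "case_prod M"]) auto
  qed
  then show ?thesis by (rule finite_subset) (intro finite_imageI finite_set_of_finite_funs; simp)
qed

lemma hs_inner_sum_right:
  "hs_inner m n Z (\<lambda>a b. \<Sum>i\<in>I. c i * X i a b) = (\<Sum>i\<in>I. c i * hs_inner m n Z (X i))"
  unfolding hs_inner_def by (simp add: sum_distrib_left sum.swap[of _ I] mult_ac)

lemma hs_inner_sum_left:
  "hs_inner m n (\<lambda>a b. \<Sum>i\<in>I. c i * X i a b) Z = (\<Sum>i\<in>I. cnj (c i) * hs_inner m n (X i) Z)"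
  unfolding hs_inner_def
  by (simp add: sum_distrib_left sum_distrib_right sum.swap[of _ I] mult_ac)

lemma hs_inner_diff_right:
  "hs_inner m n Z (\<lambda>a b. X a b - Y a b) = hs_inner m n Z X - hs_inner m n Z Y"
  unfolding hs_inner_def by (simp add: right_diff_distrib sum_subtractf)

lemma hs_inner_ketbra:
  assumes "u \<in> comps m n" "w \<in> comps m n"
  shows "hs_inner m n X (ketbra u w) = cnj (X u w)"
proof -
  have "cnj (X a b) * ketbra u w a b = (if b = w then if a = u then cnj (X u w) else 0 else 0)" for a b
    by (simp add: ketbra_def)
  then show ?thesis using assms finite_comps by (simp add: hs_inner_def)
qed

lemma omega_sum:
  "omega m n g (\<lambda>a b. \<Sum>i\<in>I. c i * X i a b) = (\<lambda>a b. \<Sum>i\<in>I. c i * omega m n g (X i) a b)"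
proof (intro ext)
  fix a b
  let ?C = "comps m n" and ?T = "tau m n g"
  have "omega m n g (\<lambda>a b. \<Sum>i\<in>I. c i * X i a b) a b
      = (\<Sum>e\<in>?C. \<Sum>f\<in>?C. \<Sum>i\<in>I. c i * (?T a f * X i f e * cnj (?T b e)))"
    unfolding omega_def op_mult_def op_adj_def
    by (simp add: sum_distrib_left sum_distrib_right mult_ac)
  also have "\<dots> = (\<Sum>i\<in>I. c i * omega m n g (X i) a b)"
    unfolding omega_def op_mult_def op_adj_def
    by (simp add: sum_distrib_left sum_distrib_right sum.swap[of _ I])
  finally show "omega m n g (\<lambda>a b. \<Sum>i\<in>I. c i * X i a b) a b = (\<Sum>i\<in>I. c i * omega m n g (X i) a b)" .
qed

lemma omega_op_adj: "op_adj (omega m n g X) = omega m n g (op_adj X)"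
proof (intro ext)
  fix a b
  let ?C = "comps m n" and ?T = "tau m n g"
  have "op_adj (omega m n g X) a b = (\<Sum>e\<in>?C. \<Sum>f\<in>?C. ?T a e * cnj (X f e) * cnj (?T b f))"
    unfolding omega_def op_mult_def op_adj_def by (simp add: sum_distrib_left sum_distrib_right mult_ac)
  also have "\<dots> = (\<Sum>f\<in>?C. \<Sum>e\<in>?C. ?T a e * cnj (X f e) * cnj (?T b f))"
    by (rule sum.swap)
  also have "\<dots> = omega m n g (op_adj X) a b"
    unfolding omega_def op_mult_def op_adj_def by (simp add: sum_distrib_right)
  finally show "op_adj (omega m n g X) a b = omega m n g (op_adj X) a b" .
qed

lemma sum_in_op_span:
  assumes "finite I" "X ` I \<subseteq> S"
  shows "(\<lambda>a b. \<Sum>i\<in>I. c i * X i a b) \<in> op_span S"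
proof -
  define c' where "c' Y = (\<Sum>i\<in>{i\<in>I. X i = Y}. c i)" for Y
  have "(\<Sum>i\<in>I. c i * X i a b) = (\<Sum>Y\<in>X ` I. c' Y * Y a b)" for a b
  proof -
    have "(\<Sum>i\<in>I. c i * X i a b) = (\<Sum>Y\<in>X ` I. \<Sum>i\<in>{i\<in>I. X i = Y}. c i * X i a b)"
      by (rule sum.image_gen[OF assms(1)])
    also have "\<dots> = (\<Sum>Y\<in>X ` I. c' Y * Y a b)"
      unfolding c'_def sum_distrib_right by (intro sum.cong refl) auto
    finally show ?thesis .
  qed
  then show ?thesis
    unfolding op_span_def using assms by (intro CollectI exI[of _ "X ` I"] exI[of _ c']) auto
qed

lemma op_span_inc: "X \<in> S \<Longrightarrow> X \<in> op_span S"
  using sum_in_op_span[of "{X}" id S "\<lambda>_. 1"] by simp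

lemma op_span_subset_ops: "S \<subseteq> ops m n \<Longrightarrow> op_span S \<subseteq> ops m n"
  unfolding op_span_def ops_def by (fastforce intro!: sum.neutral)

lemma op_span_omega_closed:
  assumes "\<forall>Y\<in>S. omega m n g Y \<in> S" "X \<in> op_span S"
  shows "omega m n g X \<in> op_span S"
proof -
  obtain G c where G: "finite G" "G \<subseteq> S" and X: "X = (\<lambda>a b. \<Sum>Y\<in>G. c Y * Y a b)"
    using assms(2) unfolding op_span_def by blast
  have "omega m n g X = (\<lambda>a b. \<Sum>Y\<in>G. c Y * omega m n g Y a b)"
    unfolding X by (rule omega_sum)
  also have "\<dots> \<in> op_span S"
    using G assms(1) by (intro sum_in_op_span) auto
  finally show ?thesis .
qed

lemma comp_subset_ops: "comp m n k \<subseteq> ops m n"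
  unfolding comp_def
  by (rule op_span_subset_ops) (auto simp: irreducible_inv_def invariant_def is_subsp_def)

lemma omega_comp:
  assumes "g \<in> SU m" "X \<in> comp m n k"
  shows "omega m n g X \<in> comp m n k"
  using assms unfolding comp_def
  by (intro op_span_omega_closed) (auto simp: irreducible_inv_def invariant_def)

definition hs_orthonormal :: "nat \<Rightarrow> nat \<Rightarrow> ('i \<Rightarrow> op) \<Rightarrow> 'i set \<Rightarrow> bool" where
  "hs_orthonormal m n B F \<longleftrightarrow>
     (\<forall>M\<in>F. \<forall>M'\<in>F. hs_inner m n (B M) (B M') = (if M = M' then 1 else 0))"

lemma hs_orthonormal_inj_on: "hs_orthonormal m n B F \<Longrightarrow> inj_on B F"
  unfolding hs_orthonormal_def inj_on_def by (metis zero_neq_one)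

lemma hs_inner_orthonormal_sum:
  assumes "hs_orthonormal m n B F" "finite F" "M \<in> F"
  shows "hs_inner m n (B M) (\<lambda>a b. \<Sum>M'\<in>F. c M' * B M' a b) = c M"
proof -
  have "hs_inner m n (B M) (\<lambda>a b. \<Sum>M'\<in>F. c M' * B M' a b)
      = (\<Sum>M'\<in>F. if M' = M then c M' else 0)"
    unfolding hs_inner_sum_right using assms(1,3) unfolding hs_orthonormal_def
    by (intro sum.cong refl) auto
  then show ?thesis using assms(2,3) by simp
qed

lemma op_span_imageE:
  assumes "finite F" "inj_on B F" "Z \<in> op_span (B ` F)"
  obtains c where "Z = (\<lambda>a b. \<Sum>M\<in>F. c M * B M a b)"
proof -
  obtain G c where G: "finite G" "G \<subseteq> B ` F" and Z: "Z = (\<lambda>a b. \<Sum>Y\<in>G. c Y * Y a b)"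
    using assms(3) unfolding op_span_def by blast
  define H where "H = {M\<in>F. B M \<in> G}"
  have GH: "G = B ` H" and injH: "inj_on B H"
    using G(2) inj_on_subset[OF assms(2)] unfolding H_def by auto
  have "(\<Sum>Y\<in>G. c Y * Y a b) = (\<Sum>M\<in>F. (if B M \<in> G then c (B M) else 0) * B M a b)" for a b
  proof -
    have "(\<Sum>Y\<in>G. c Y * Y a b) = (\<Sum>M\<in>H. c (B M) * B M a b)"
      unfolding GH by (simp add: sum.reindex[OF injH])
    also have "\<dots> = (\<Sum>M\<in>F. (if B M \<in> G then c (B M) else 0) * B M a b)"
      using assms(1) unfolding H_def by (intro sum.mono_neutral_cong_left) auto
    finally show ?thesis .
  qed
  then show ?thesis using that[of "\<lambda>M. if B M \<in> G then c (B M) else 0"] Z by blast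
qed

lemma orthonormal_expansion:
  assumes "hs_orthonormal m n B F" "finite F" "Z \<in> op_span (B ` F)"
  shows "Z = (\<lambda>a b. \<Sum>M\<in>F. hs_inner m n (B M) Z * B M a b)"
proof -
  obtain c where Z: "Z = (\<lambda>a b. \<Sum>M\<in>F. c M * B M a b)"
    using op_span_imageE[OF assms(2) hs_orthonormal_inj_on[OF assms(1)] assms(3)] .
  show ?thesis
    using hs_inner_orthonormal_sum[OF assms(1,2)] by (subst (1 2) Z) auto
qed

lemma proj_orthonormal:
  assumes "hs_orthonormal m n B F" "finite F"
  shows "proj m n (op_span (B ` F)) X = (\<lambda>a b. \<Sum>M\<in>F. hs_inner m n (B M) X * B M a b)"
  unfolding proj_def
proof (rule the_equality)
  let ?Y = "\<lambda>a b. \<Sum>M\<in>F. hs_inner m n (B M) X * B M a b"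
  have residual_orth: "hs_inner m n (B M) (\<lambda>a b. X a b - ?Y a b) = 0" if "M \<in> F" for M
    using hs_inner_orthonormal_sum[OF assms that] by (simp add: hs_inner_diff_right)
  show "?Y \<in> op_span (B ` F) \<and> (\<forall>Z\<in>op_span (B ` F). hs_inner m n Z (\<lambda>a b. X a b - ?Y a b) = 0)"
  proof (intro conjI ballI)
    show "?Y \<in> op_span (B ` F)" using assms(2) by (intro sum_in_op_span) auto
  next
    fix Z assume "Z \<in> op_span (B ` F)"
    then have "hs_inner m n Z (\<lambda>a b. X a b - ?Y a b)
        = (\<Sum>M\<in>F. cnj (hs_inner m n (B M) Z) * hs_inner m n (B M) (\<lambda>a b. X a b - ?Y a b))"
      by (subst orthonormal_expansion[OF assms]) (simp_all add: hs_inner_sum_left)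
    then show "hs_inner m n Z (\<lambda>a b. X a b - ?Y a b) = 0" by (simp add: residual_orth)
  qed
next
  fix Y assume Y: "Y \<in> op_span (B ` F) \<and> (\<forall>Z\<in>op_span (B ` F). hs_inner m n Z (\<lambda>a b. X a b - Y a b) = 0)"
  have coef: "hs_inner m n (B M) Y = hs_inner m n (B M) X" if "M \<in> F" for M
  proof -
    have "hs_inner m n (B M) (\<lambda>a b. X a b - Y a b) = 0"
      using Y op_span_inc[of "B M" "B ` F"] that by blast
    then show ?thesis by (simp add: hs_inner_diff_right)
  qed
  have "Y = (\<lambda>a b. \<Sum>M\<in>F. hs_inner m n (B M) Y * B M a b)"
    using orthonormal_expansion[OF assms] Y by blast
  also have "\<dots> = (\<lambda>a b. \<Sum>M\<in>F. hs_inner m n (B M) X * B M a b)"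
    using coef by (intro ext sum.cong) simp_all
  finally show "Y = (\<lambda>a b. \<Sum>M\<in>F. hs_inner m n (B M) X * B M a b)" .
qed

lemma GT_basis_orthonormal: "GT_basis m n k B \<Longrightarrow> hs_orthonormal m n B (GT m (lam m k))"
  unfolding GT_basis_def hs_orthonormal_def by blast

lemma GT_basis_span: "GT_basis m n k B \<Longrightarrow> comp m n k = op_span (B ` GT m (lam m k))"
  unfolding GT_basis_def by simp

lemma GT_basis_cnj: "GT_basis m n k B \<Longrightarrow> M \<in> GT m (lam m k) \<Longrightarrow> cnj (B M a b) = B M a b"
  unfolding GT_basis_def by (simp add: Reals_cnj_iff)

lemma GT_basis_weight:
  assumes "GT_basis m n k B" "M \<in> GT m (lam m k)" "B M a b \<noteq> 0" "j < m"
  shows "gt_weight M (j + 1) = int (a j) - int (b j) + int k"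
  using assms unfolding GT_basis_def by blast

lemma GT_basis_zero_weight:
  assumes "GT_basis m n k B" "M \<in> GT m (lam m k)" "B M u u \<noteq> 0" "m \<ge> 1"
  shows "zero_weight m M"
  unfolding zero_weight_def
proof
  fix j assume "j \<in> {1..m}"
  then obtain i where "j = i + 1" "i < m" by (intro that[of "j - 1"]) auto
  then show "gt_weight M j = gt_weight M 1"
    using assms GT_basis_weight[of m n k B M u u] by simp
qed

lemma GT_basis_diagonal:
  assumes "GT_basis m n k B" "M \<in> GT m (lam m k)" "B M u u \<noteq> 0" "B M a b \<noteq> 0"
  shows "a = b"
proof (rule ext)
  fix j
  have "B M \<in> ops m n" using assms(1,2) comp_subset_ops unfolding GT_basis_def by blast
  then have "a \<in> comps m n" "b \<in> comps m n" using assms(4) unfolding ops_def by blast+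
  moreover have "int (a j) = int (b j)" if "j < m"
    using that assms GT_basis_weight[of m n k B M u u j] GT_basis_weight[of m n k B M a b j] by simp
  ultimately show "a j = b j" unfolding comps_def by (cases "j < m") auto
qed

lemma P_lam_ketbra:
  assumes "GT_basis m n k B" "u \<in> comps m n"
  shows "P_lam m n k (ketbra u u) = (\<lambda>a b. \<Sum>M\<in>GT m (lam m k). B M u u * B M a b)"
  unfolding P_lam_def GT_basis_span[OF assms(1)]
    proj_orthonormal[OF GT_basis_orthonormal[OF assms(1)] finite_GT]
  using assms by (simp add: hs_inner_ketbra GT_basis_cnj)

lemma P_lam_ketbra_op_adj:
  assumes "GT_basis m n k B" "u \<in> comps m n"
  shows "op_adj (P_lam m n k (ketbra u u)) = P_lam m n k (ketbra u u)"
proof -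
  have "cnj (B M u u * B M b a) = B M u u * B M a b" if "M \<in> GT m (lam m k)" for M a b
    using GT_basis_diagonal[OF assms(1) that, of u] GT_basis_cnj[OF assms(1) that]
    by (cases "B M u u = 0"; cases "B M a b = 0"; cases "B M b a = 0") auto
  then show ?thesis unfolding P_lam_ketbra[OF assms] op_adj_def by simp
qed

lemma filt_GT_expansion:
  assumes "GT_basis m n k B" "g \<in> SU m" "v0 \<in> comps m n" "v \<in> comps m n"
  shows "filt m n k v0 v g = (1 / s_lam m n k) *
    (\<Sum>M\<in>GT m (lam m k). B M v0 v0 * (\<Sum>M'\<in>GT m (lam m k). B M' v v * lam_elem_adj m n B g M M'))"
proof -
  define F where "F = GT m (lam m k)"
  define Y where "Y = P_lam m n k (ketbra v0 v0)"
  define A where "A M' M = hs_inner m n (B M') (omega m n g (B M))" for M' M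
  have Y: "Y = (\<lambda>a b. \<Sum>M\<in>F. B M v0 v0 * B M a b)"
    unfolding Y_def F_def by (rule P_lam_ketbra[OF assms(1,3)])
  have "Y \<in> comp m n k"
    unfolding Y GT_basis_span[OF assms(1)] F_def by (intro sum_in_op_span finite_GT) auto
  then have "omega m n g Y \<in> op_span (B ` F)"
    using omega_comp[OF assms(2)] GT_basis_span[OF assms(1)] unfolding F_def by blast
  then have "omega m n g Y = (\<lambda>a b. \<Sum>M'\<in>F. hs_inner m n (B M') (omega m n g Y) * B M' a b)"
    unfolding F_def by (rule orthonormal_expansion[OF GT_basis_orthonormal[OF assms(1)] finite_GT])
  also have "\<dots> = (\<lambda>a b. \<Sum>M'\<in>F. (\<Sum>M\<in>F. B M v0 v0 * A M' M) * B M' a b)"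
    unfolding A_def Y omega_sum hs_inner_sum_right ..
  finally have expansion: "omega m n g Y v v = (\<Sum>M'\<in>F. (\<Sum>M\<in>F. B M v0 v0 * A M' M) * B M' v v)"
    by simp
  have "omega m n g Y v v = omega m n g (op_adj Y) v v"
    unfolding Y_def P_lam_ketbra_op_adj[OF assms(1,3)] ..
  also have "\<dots> = cnj (omega m n g Y v v)"
    unfolding omega_op_adj[symmetric] by (simp add: op_adj_def)
  also have "\<dots> = (\<Sum>M'\<in>F. \<Sum>M\<in>F. B M v0 v0 * cnj (A M' M) * B M' v v)"
    unfolding expansion cnj_sum sum_distrib_right
    by (intro sum.cong refl) (simp add: GT_basis_cnj[OF assms(1)] F_def)
  also have "\<dots> = (\<Sum>M\<in>F. B M v0 v0 * (\<Sum>M'\<in>F. B M' v v * lam_elem_adj m n B g M M'))"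
    unfolding lam_elem_adj_def A_def sum_distrib_left by (subst sum.swap) (simp add: mult_ac)
  finally show ?thesis unfolding filt_def Y_def F_def by simp
qed

theorem corollaryT7:
  fixes m n k :: nat and v0 v :: fock and g :: "nat \<Rightarrow> nat \<Rightarrow> complex"
    and B :: "gtpat \<Rightarrow> op"
  assumes "m \<ge> 2" and "k \<le> n"
    and "v0 \<in> comps m n" and "v \<in> comps m n"
    and "g \<in> SU m"
    and "GT_basis m n k B"
    and "s_lam m n k \<noteq> 0"
  shows "filt m n k v0 v g =
      (1 / s_lam m n k) * (-1) powi (phi m (Npat m v0) + phi m (Npat m v)) *
      (\<Sum>M\<in>GT m (lam m k). CG m B M v0 v0 *
         (\<Sum>M'\<in>GT m (lam m k). CG m B M' v v * lam_elem_adj m n B g M M'))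
    \<and> filt m n k v0 v g =
      (1 / s_lam m n k) * (-1) powi (phi m (Npat m v0) + phi m (Npat m v)) *
      (\<Sum>M\<in>{M\<in>GT m (lam m k). zero_weight m M}. CG m B M v0 v0 *
         (\<Sum>M'\<in>{M'\<in>GT m (lam m k). zero_weight m M'}. CG m B M' v v * lam_elem_adj m n B g M M'))"
proof -
  define F where "F = GT m (lam m k)"
  define \<sigma> where "\<sigma> = (-1::complex) powi (phi m (Npat m v0) + phi m (Npat m v))"
  define \<sigma>\<^sub>0 where "\<sigma>\<^sub>0 = (-1::complex) powi phi m (Npat m v0)"
  define \<sigma>\<^sub>1 where "\<sigma>\<^sub>1 = (-1::complex) powi phi m (Npat m v)"
  have sign: "\<sigma> * (\<sigma>\<^sub>0 * \<sigma>\<^sub>1) = 1"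
    unfolding \<sigma>_def \<sigma>\<^sub>0_def \<sigma>\<^sub>1_def by (simp add: power_int_add mult_ac)
  have "(\<Sum>M\<in>F. CG m B M v0 v0 * (\<Sum>M'\<in>F. CG m B M' v v * lam_elem_adj m n B g M M'))
      = \<sigma>\<^sub>0 * \<sigma>\<^sub>1 * (\<Sum>M\<in>F. B M v0 v0 * (\<Sum>M'\<in>F. B M' v v * lam_elem_adj m n B g M M'))"
    unfolding CG_def \<sigma>\<^sub>0_def \<sigma>\<^sub>1_def by (simp add: sum_distrib_left mult_ac)
  then have "filt m n k v0 v g = (1 / s_lam m n k) * \<sigma> *
      (\<Sum>M\<in>F. CG m B M v0 v0 * (\<Sum>M'\<in>F. CG m B M' v v * lam_elem_adj m n B g M M'))"
    unfolding filt_GT_expansion[OF assms(6,5,3,4)] F_def[symmetric]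
    using sign by (simp add: mult.assoc[symmetric])
  moreover have "(\<Sum>M\<in>{M\<in>F. zero_weight m M}. CG m B M u u * h M) = (\<Sum>M\<in>F. CG m B M u u * h M)"
    for u h
    using GT_basis_zero_weight[OF assms(6)] assms(1) unfolding F_def CG_def
    by (intro sum.mono_neutral_left finite_GT) auto
  ultimately show ?thesis unfolding \<sigma>_def F_def[symmetric] by simp
qed

end
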